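(* There exists an absolute constant $0<c\le\tfrac12$ such that for every $q\in(0,\tfrac12)$, every positive integer $m$ and every integer $n>1$, \[ \mathbb{P}(\tau'_m\ge n^2)\ge 1-e^{-cm/n}. \]
   Context: Fix $q\in(0,1/2)$. Let $Y_1,Y_2,\dots$ be i.i.d. with $\mathbb{P}(Y_i=1)=\mathbb{P}(Y_i=-1)=q$ and $\mathbb{P}(Y_i=0)=1-2q$, and $T_j=Y_1+\cdots+Y_j$ (the lazy simple random walk with parameter $q$). For a nonzero integer $m$, $\tau'_m$ is the smallest positive integer $t$ with $T_t=m$. *)

theory Defs
  imports "HOL-Probability.Probability"
begin

text \<open>Step distribution of the lazy simple random walk with parameter q:
  P(Y=1) = P(Y=-1) = q, P(Y=0) = 1 - 2q (meaningful for 0 < q < 1/2).\<close>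
definition lazy_step :: "real \<Rightarrow> int pmf" where
  "lazy_step q = embed_pmf (\<lambda>x::int. if x = 1 \<or> x = -1 then q else if x = 0 then 1 - 2*q else 0)"

text \<open>Probability space of the i.i.d. sequence Y_1, Y_2, ... (stream index 0 is Y_1).\<close>
definition lazy_walk_space :: "real \<Rightarrow> int stream measure" where
  "lazy_walk_space q = stream_space (measure_pmf (lazy_step q))"

definition walk :: "int stream \<Rightarrow> nat \<Rightarrow> int" where
  "walk \<omega> j = sum_list (stake j \<omega>)"

definition hit_time :: "int \<Rightarrow> int stream \<Rightarrow> enat" where
  "hit_time m \<omega> = (if \<exists>t>0. walk \<omega> t = m
                    then enat (LEAST t. t > 0 \<and> walk \<omega> t = m) else \<infinity>)"

end

theory Submission
  imports Defs
begin

text \<open>The event contains \<open>{T\<^sub>t < m for all t \<le> n\<^sup>2 - 1}\<close>. As a function of the horizon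
  \<open>k\<close> and the level \<open>a\<close>, the probability that the walk stays below \<open>a\<close> up to time \<open>k\<close> satisfies
  the backward equation of the lazy walk killed on reaching the level, hence dominates every
  subsolution of that equation (a discrete maximum principle). For \<open>m \<le> n\<close> a truncated sine
  eigenfunction on \<open>{0..4n}\<close> gives the bound \<open>m / (8n)\<close>; for \<open>m \<ge> n\<close> an exponential
  eigenfunction of rate \<open>1 / (2n)\<close> gives \<open>1 - exp (1/4 - m / (2n))\<close>. Both are at least
  \<open>1 - exp (- m / (8n))\<close>, so \<open>c = 1/8\<close> works.\<close>

lemma pmf_lazy_step:
  assumes "0 \<le> q" "q \<le> 1/2"
  shows "pmf (lazy_step q) x = (if x = 1 \<or> x = -1 then q else if x = 0 then 1 - 2*q else 0)"
proof -
  define f :: "int \<Rightarrow> real"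
    where "f y = (if y = 1 \<or> y = -1 then q else if y = 0 then 1 - 2*q else 0)" for y
  have nonneg: "0 \<le> f y" for y
    using assms by (simp add: f_def)
  have "(\<integral>\<^sup>+y. ennreal (f y) \<partial>count_space UNIV) = (\<Sum>y\<in>{-1,0,1}. ennreal (f y))"
    by (rule nn_integral_count_space') (auto simp: f_def)
  also have "\<dots> = ennreal (\<Sum>y\<in>{-1,0,1}. f y)"
    using nonneg by simp
  also have "(\<Sum>y\<in>{-1,0,1::int}. f y) = 1"
    by (simp add: f_def)
  finally show ?thesis
    using pmf_embed_pmf[of f] nonneg unfolding lazy_step_def f_def by simp
qed

lemma set_pmf_lazy_step:
  assumes "0 \<le> q" "q \<le> 1/2"
  shows "set_pmf (lazy_step q) \<subseteq> {-1, 0, 1}"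
  using pmf_lazy_step[OF assms] by (auto simp: set_pmf_eq)

lemma nn_integral_lazy_step:
  assumes "0 \<le> q" "q \<le> 1/2" and nonneg: "\<And>y. 0 \<le> f y"
  shows "(\<integral>\<^sup>+y. ennreal (f y) \<partial>lazy_step q) = ennreal (q * f (-1) + (1 - 2*q) * f 0 + q * f 1)"
proof -
  have "(\<integral>\<^sup>+y. ennreal (f y) \<partial>lazy_step q) = (\<Sum>y\<in>{-1,0,1}. ennreal (f y) * pmf (lazy_step q) y)"
    using set_pmf_lazy_step[OF assms(1,2)] by (intro nn_integral_measure_pmf_support) auto
  also have "\<dots> = ennreal (\<Sum>y\<in>{-1,0,1}. f y * pmf (lazy_step q) y)"
    using nonneg by (simp add: ennreal_mult)
  also have "(\<Sum>y\<in>{-1,0,1::int}. f y * pmf (lazy_step q) y) = q * f (-1) + (1 - 2*q) * f 0 + q * f 1"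
    using assms by (simp add: pmf_lazy_step)
  finally show ?thesis .
qed

lemma prob_space_lazy_walk_space: "prob_space (lazy_walk_space q)"
  unfolding lazy_walk_space_def
  by (rule prob_space.prob_space_stream_space) (rule prob_space_measure_pmf)

lemma space_lazy_walk_space [simp]: "space (lazy_walk_space q) = UNIV"
  by (simp add: lazy_walk_space_def space_stream_space)

lemma walk_0 [simp]: "walk \<omega> 0 = 0"
  by (simp add: walk_def)

lemma walk_Suc_Cons [simp]: "walk (y ## \<omega>) (Suc t) = y + walk \<omega> t"
  by (simp add: walk_def)

lemma measurable_walk [measurable]:
  "(\<lambda>\<omega>. walk \<omega> t) \<in> stream_space (measure_pmf p) \<rightarrow>\<^sub>M count_space UNIV"
  unfolding walk_def by measurable

definition stays_below :: "nat \<Rightarrow> int \<Rightarrow> int stream set" where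
  "stays_below K a = {\<omega>. \<forall>t\<le>K. walk \<omega> t < a}"

lemma sets_stays_below [measurable]: "stays_below K a \<in> sets (stream_space (measure_pmf p))"
proof -
  have "stays_below K a = {\<omega> \<in> space (stream_space (measure_pmf p)). \<forall>t\<le>K. walk \<omega> t < a}"
    by (auto simp: stays_below_def space_stream_space)
  also have "\<dots> \<in> sets (stream_space (measure_pmf p))"
    by measurable
  finally show ?thesis .
qed

lemma stays_below_0: "stays_below 0 a = (if 0 < a then UNIV else {})"
  by (auto simp: stays_below_def)

lemma Cons_in_stays_below_Suc:
  "y ## \<omega> \<in> stays_below (Suc K) a \<longleftrightarrow> 0 < a \<and> \<omega> \<in> stays_below K (a - y)"
  unfolding stays_below_def mem_Collect_eq less_Suc_eq_le[symmetric] All_less_Suc2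
  by (simp add: less_diff_eq add.commute)

lemma emeasure_stays_below_Suc:
  fixes p :: "int pmf"
  defines "S \<equiv> stream_space (measure_pmf p)"
  shows "emeasure S (stays_below (Suc K) a) =
    (if 0 < a then \<integral>\<^sup>+y. emeasure S (stays_below K (a - y)) \<partial>p else 0)"
proof -
  have "emeasure S (stays_below (Suc K) a) =
      (\<integral>\<^sup>+y. emeasure S {\<omega> \<in> space S. y ## \<omega> \<in> stays_below (Suc K) a} \<partial>p)"
    unfolding S_def
    by (rule prob_space.emeasure_stream_space[OF prob_space_measure_pmf sets_stays_below])
  then show ?thesis
    by (simp add: Cons_in_stays_below_Suc S_def space_stream_space)
qed

definition survival :: "real \<Rightarrow> nat \<Rightarrow> int \<Rightarrow> real" where
  "survival q K a = measure (lazy_walk_space q) (stays_below K a)"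

lemma survival_nonneg: "0 \<le> survival q K a"
  by (simp add: survival_def)

lemma survival_0: "survival q 0 a = (if 0 < a then 1 else 0)"
proof -
  interpret prob_space "lazy_walk_space q"
    by (rule prob_space_lazy_walk_space)
  show ?thesis
    using prob_space by (simp add: survival_def stays_below_0)
qed

lemma survival_Suc:
  assumes "0 \<le> q" "q \<le> 1/2"
  shows "survival q (Suc K) a = (if 0 < a then
    q * survival q K (a + 1) + (1 - 2*q) * survival q K a + q * survival q K (a - 1) else 0)"
proof -
  interpret prob_space "lazy_walk_space q"
    by (rule prob_space_lazy_walk_space)
  have emeasure_eq: "emeasure (lazy_walk_space q) (stays_below k b) = ennreal (survival q k b)" for k b
    by (simp add: survival_def emeasure_eq_measure)
  have "ennreal (survival q (Suc K) a) =
      (if 0 < a then \<integral>\<^sup>+y. ennreal (survival q K (a - y)) \<partial>lazy_step q else 0)"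
    using emeasure_stays_below_Suc[of "lazy_step q" K a]
    by (simp add: emeasure_eq[symmetric] lazy_walk_space_def)
  also have "\<dots> = ennreal (if 0 < a then
      q * survival q K (a + 1) + (1 - 2*q) * survival q K a + q * survival q K (a - 1) else 0)"
    using nn_integral_lazy_step[OF assms, of "\<lambda>y. survival q K (a - y)"]
    by (simp add: survival_nonneg)
  finally show ?thesis
    using assms by (subst (asm) ennreal_inj) (auto simp: survival_nonneg)
qed

definition lazy_subsolution :: "real \<Rightarrow> (nat \<Rightarrow> int \<Rightarrow> real) \<Rightarrow> bool" where
  "lazy_subsolution q g \<longleftrightarrow> (\<forall>a. g 0 a \<le> 1) \<and> (\<forall>k a. a \<le> 0 \<longrightarrow> g k a \<le> 0) \<and>
     (\<forall>k a. 0 < a \<longrightarrow> g (Suc k) a \<le> q * g k (a + 1) + (1 - 2*q) * g k a + q * g k (a - 1))"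

lemma lazy_subsolution_le_survival:
  assumes q: "0 \<le> q" "q \<le> 1/2" and "lazy_subsolution q g"
  shows "g K a \<le> survival q K a"
proof (induction K arbitrary: a)
  case 0
  then show ?case
    using assms(3) by (auto simp: lazy_subsolution_def survival_0)
next
  case (Suc K)
  show ?case
  proof (cases "0 < a")
    case False
    then show ?thesis
      using assms(3) by (simp add: lazy_subsolution_def survival_Suc[OF q])
  next
    case True
    then have "g (Suc K) a \<le> q * g K (a + 1) + (1 - 2*q) * g K a + q * g K (a - 1)"
      using assms(3) by (simp add: lazy_subsolution_def)
    also have "\<dots> \<le> q * survival q K (a + 1) + (1 - 2*q) * survival q K a + q * survival q K (a - 1)"
      using q Suc.IH by (intro add_mono mult_left_mono) auto
    finally show ?thesis
      using True by (simp add: survival_Suc[OF q])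
  qed
qed

lemma cos_ge_one_minus_sq_half: "1 - x^2 / 2 \<le> cos (x::real)"
proof -
  have "cos x = 1 - 2 * sin (x/2) ^ 2"
    using cos_double_sin[of "x/2"] by simp
  moreover have "sin (x/2) ^ 2 \<le> (x/2) ^ 2"
    using abs_sin_x_le_abs_x[of "x/2"] by (metis abs_le_square_iff)
  ultimately show ?thesis
    by (simp add: power_divide)
qed

lemma sin_ge_half_self:
  assumes "0 \<le> x" "x \<le> 1"
  shows "x / 2 \<le> sin (x::real)"
proof -
  have "sin 0 - 0 / 2 \<le> sin x - x / 2"
  proof (rule DERIV_nonneg_imp_nondecreasing[OF assms(1)])
    fix y :: real
    assume "0 \<le> y" "y \<le> x"
    then have "y^2 \<le> 1"
      using assms by (simp add: power_le_one)
    then have "0 \<le> cos y - 1/2"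
      using cos_ge_one_minus_sq_half[of y] by simp
    moreover have "((\<lambda>y. sin y - y / 2) has_real_derivative (cos y - 1/2)) (at y)"
      by (auto intro!: derivative_eq_intros)
    ultimately show "\<exists>d. ((\<lambda>y. sin y - y / 2) has_real_derivative d) (at y) \<and> 0 \<le> d"
      by blast
  qed
  then show ?thesis
    by simp
qed

lemma cosh_le_one_plus_sq:
  assumes "0 \<le> x" "x \<le> 1"
  shows "cosh x \<le> 1 + (x::real)^2"
proof -
  have "exp (-x) \<le> 1 - x + x^2"
  proof -
    have "1 \<le> (1 + x) * (1 - x + x^2)"
      using assms by (simp add: algebra_simps power2_eq_square power3_eq_cube)
    also have "\<dots> \<le> exp x * (1 - x + x^2)"
      using assms by (intro mult_right_mono) (auto simp: power2_eq_square)
    finally show ?thesis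
      by (simp add: exp_minus field_simps)
  qed
  then show ?thesis
    using exp_bound[OF assms] by (simp add: cosh_field_def)
qed

text \<open>\<open>sin (h a)\<close> is an eigenfunction of the one-step averaging operator with eigenvalue
  \<open>1 - 2q(1 - cos h) \<ge> cos h \<ge> 0\<close>; cut off at its zeros \<open>0\<close> and \<open>L\<close> it stays nonnegative,
  which settles the levels \<open>a \<ge> L\<close>.\<close>
lemma lazy_subsolution_sine:
  fixes L :: nat and h :: real
  assumes q: "0 \<le> q" "q \<le> 1/2" and L: "2 \<le> L"
  defines "h \<equiv> pi / L"
  shows "lazy_subsolution q
    (\<lambda>k a. if 0 \<le> a \<and> a \<le> L then sin (h * a) * (1 - 2*q*(1 - cos h))^k else 0)"
proof -
  define \<mu> where "\<mu> = 1 - 2*q*(1 - cos h)"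
  define g where "g = (\<lambda>k (a::int). if 0 \<le> a \<and> a \<le> L then sin (h * a) * \<mu>^k else 0)"
  have hL: "h * L = pi"
    using L by (simp add: h_def)
  have "cos h \<le> \<mu>"
    using q mult_right_mono[of "2*q" 1 "1 - cos h"] by (simp add: \<mu>_def algebra_simps)
  moreover have "0 \<le> cos h"
  proof (rule cos_ge_zero)
    show "- (pi / 2) \<le> h"
      using pi_gt_zero divide_nonneg_nonneg[of pi "real L"] unfolding h_def by linarith
    show "h \<le> pi / 2"
      using L pi_gt_zero mult_left_mono[of 2 L pi] by (simp add: h_def field_simps)
  qed
  ultimately have "0 \<le> \<mu>"
    by linarith
  have g_nonneg: "0 \<le> g k a" for k a
  proof -
    have "0 \<le> sin (h * a)" if "0 \<le> a" "a \<le> L"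
      using that hL pi_gt_zero mult_left_mono[of a L h]
      by (intro sin_ge_zero) (auto simp: h_def)
    then show ?thesis
      using \<open>0 \<le> \<mu>\<close> by (simp add: g_def)
  qed
  have "g (Suc k) a \<le> q * g k (a + 1) + (1 - 2*q) * g k a + q * g k (a - 1)"
    if "0 < a" for k a
  proof (cases "a < L")
    case True
    define x where "x = h * a"
    have "q * g k (a + 1) + (1 - 2*q) * g k a + q * g k (a - 1)
        = \<mu>^k * (q * (sin (x + h) + sin (x - h)) + (1 - 2*q) * sin x)"
      using that True by (simp add: g_def x_def algebra_simps)
    also have "\<dots> = sin x * \<mu>^Suc k"
      by (simp add: sin_add sin_diff \<mu>_def algebra_simps)
    also have "\<dots> = g (Suc k) a"
      using that True by (simp add: g_def x_def)
    finally show ?thesis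
      by simp
  next
    case False
    then have "g (Suc k) a = 0"
      using hL by (auto simp: g_def mult.commute)
    then show ?thesis
      using q g_nonneg by (simp add: add_nonneg_nonneg)
  qed
  then have "lazy_subsolution q g"
    by (auto simp: lazy_subsolution_def g_def)
  then show ?thesis
    unfolding g_def \<mu>_def .
qed

text \<open>\<open>exp (- l a)\<close> is an eigenfunction of the one-step averaging operator with eigenvalue
  \<open>q e\<^sup>-\<^sup>l + (1 - 2q) + q e\<^sup>l = 1 + 2q(cosh l - 1)\<close>.\<close>
lemma lazy_subsolution_exponential:
  assumes "0 \<le> q" "0 \<le> l"
  shows "lazy_subsolution q (\<lambda>k a. 1 - exp (- l * a) * (1 + 2*q*(cosh l - 1))^k)"
proof -
  define \<rho> where "\<rho> = 1 + 2*q*(cosh l - 1)"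
  have "1 \<le> \<rho>"
    using assms cosh_real_ge_1[of l] by (simp add: \<rho>_def)
  have shift: "exp (- l * (a + d)) = exp (- l * a) * exp (- l * d)" for a d :: real
    by (simp add: exp_add[symmetric] algebra_simps)
  have "1 \<le> exp (- l * a) * \<rho>^k" if "a \<le> 0" for k and a :: int
    using \<open>1 \<le> \<rho>\<close> assms that one_le_power[of \<rho> k]
      mult_mono[of 1 "exp (- l * a)" 1 "\<rho>^k"]
    by (simp add: mult_nonneg_nonpos)
  moreover have "q * (1 - exp (- l * (a + 1)) * \<rho>^k) + (1 - 2*q) * (1 - exp (- l * a) * \<rho>^k)
      + q * (1 - exp (- l * (a - 1)) * \<rho>^k) = 1 - exp (- l * a) * \<rho>^Suc k" for k and a :: real
    using shift[of a 1] shift[of a "-1"]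
    by (simp add: \<rho>_def cosh_field_def algebra_simps)
  ultimately show ?thesis
    by (simp add: lazy_subsolution_def \<rho>_def[symmetric])
qed

lemma sine_eigenvalue_power_ge_half:
  assumes q: "0 \<le> q" "q \<le> 1/2" and "0 < n"
  shows "1/2 \<le> (1 - 2*q*(1 - cos (pi / (4 * real n))))^(n^2 - 1)"
proof -
  define h where "h = pi / (4 * real n)"
  define \<mu> where "\<mu> = 1 - 2*q*(1 - cos h)"
  have "0 < h" "h \<le> 1"
    using assms pi_less_4 by (auto simp: h_def field_simps)
  then have "h^2 \<le> 1"
    by (simp add: power_le_one)
  have "cos h \<le> \<mu>"
    using q mult_right_mono[of "2*q" 1 "1 - cos h"] by (simp add: \<mu>_def algebra_simps)
  then have "1 - h^2/2 \<le> \<mu>"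
    using cos_ge_one_minus_sq_half[of h] by linarith
  have "1 - real (n^2 - 1) * (h^2/2) \<le> (1 - h^2/2)^(n^2 - 1)"
    using Bernoulli_inequality[of "- (h^2/2)" "n^2 - 1"] \<open>h^2 \<le> 1\<close> by simp
  also have "\<dots> \<le> \<mu>^(n^2 - 1)"
    using \<open>1 - h^2/2 \<le> \<mu>\<close> \<open>h^2 \<le> 1\<close> by (intro power_mono) auto
  moreover have "real (n^2 - 1) * (h^2/2) \<le> real n ^ 2 * (h^2/2)"
    by (intro mult_right_mono) auto
  moreover have "real n ^ 2 * (h^2/2) = pi^2 / 32"
    using \<open>0 < n\<close> by (simp add: h_def power_divide)
  moreover have "pi^2 / 32 \<le> 1/2"
    using pi_less_4 pi_gt_zero power_mono[of pi 4 2] by simp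
  ultimately show ?thesis
    unfolding \<mu>_def h_def by linarith
qed

lemma cosh_eigenvalue_power_le_exp:
  assumes q: "0 \<le> q" "q \<le> 1/2" and "0 < n"
  shows "(1 + 2*q*(cosh (1 / (2 * real n)) - 1))^(n^2 - 1) \<le> exp (1/4)"
proof -
  define l where "l = 1 / (2 * real n)"
  define \<rho> where "\<rho> = 1 + 2*q*(cosh l - 1)"
  have "0 \<le> l" "l \<le> 1"
    using assms by (auto simp: l_def field_simps)
  have "1 \<le> \<rho>"
    using q cosh_real_ge_1[of l] by (simp add: \<rho>_def)
  have "\<rho> \<le> cosh l"
    using q cosh_real_ge_1[of l] mult_right_mono[of "2*q" 1 "cosh l - 1"]
    by (simp add: \<rho>_def algebra_simps)
  also have "\<dots> \<le> exp (l^2)"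
    using cosh_le_one_plus_sq[OF \<open>0 \<le> l\<close> \<open>l \<le> 1\<close>] exp_ge_add_one_self[of "l^2"] by linarith
  finally have "\<rho>^(n^2 - 1) \<le> exp (real (n^2 - 1) * l^2)"
    using \<open>1 \<le> \<rho>\<close> power_mono[of \<rho> "exp (l^2)" "n^2 - 1"] by (simp add: exp_of_nat_mult)
  also have "\<dots> \<le> exp (real n ^ 2 * l^2)"
    by (intro exp_mono mult_right_mono) auto
  also have "\<dots> = exp (1/4)"
    using \<open>0 < n\<close> by (simp add: l_def power_divide)
  finally show ?thesis
    unfolding \<rho>_def l_def .
qed

lemma survival_ge_small_level:
  assumes q: "0 \<le> q" "q \<le> 1/2" and "0 < n" "m \<le> n"
  shows "real m / (8 * real n) \<le> survival q (n^2 - 1) (int m)"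
proof -
  define h where "h = pi / (4 * real n)"
  have "0 \<le> h * m" "h * m \<le> 1"
    using assms pi_less_4 mult_mono[of pi 4 "real m" "real n"] by (auto simp: h_def field_simps)
  then have "h * m / 2 \<le> sin (h * m)"
    by (intro sin_ge_half_self)
  with \<open>0 \<le> h * m\<close> have "0 \<le> sin (h * m)"
    by linarith
  have "real m / (8 * real n) \<le> (h * m / 2) * (1/2)"
    using assms pi_ge_two mult_right_mono[of 2 pi "real m"] by (simp add: h_def field_simps)
  also have "\<dots> \<le> sin (h * m) * (1 - 2*q*(1 - cos h))^(n^2 - 1)"
    using \<open>0 \<le> sin (h * m)\<close> \<open>h * m / 2 \<le> sin (h * m)\<close> sine_eigenvalue_power_ge_half[OF assms(1-3)]
    by (intro mult_mono) (auto simp: h_def)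
  also have "\<dots> \<le> survival q (n^2 - 1) (int m)"
    using lazy_subsolution_le_survival[OF q lazy_subsolution_sine[OF q, of "4 * n"],
        where K = "n^2 - 1" and a = "int m"] assms
    by (simp add: h_def)
  finally show ?thesis .
qed

lemma survival_ge_large_level:
  assumes q: "0 \<le> q" "q \<le> 1/2" and "0 < n" "n \<le> m"
  shows "1 - exp (- real m / (8 * real n)) \<le> survival q (n^2 - 1) (int m)"
proof -
  define l where "l = 1 / (2 * real n)"
  have "0 \<le> l"
    by (simp add: l_def)
  have "exp (- l * m) * (1 + 2*q*(cosh l - 1))^(n^2 - 1) \<le> exp (- l * m) * exp (1/4)"
    using cosh_eigenvalue_power_le_exp[OF assms(1-3)] by (simp add: l_def)
  also have "\<dots> \<le> exp (- real m / (8 * real n))"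
    using assms by (simp add: l_def exp_add[symmetric] field_simps)
  finally have "1 - exp (- real m / (8 * real n)) \<le> 1 - exp (- l * m) * (1 + 2*q*(cosh l - 1))^(n^2 - 1)"
    by linarith
  also have "\<dots> \<le> survival q (n^2 - 1) (int m)"
    using lazy_subsolution_le_survival[OF q lazy_subsolution_exponential[OF q(1) \<open>0 \<le> l\<close>],
        where K = "n^2 - 1" and a = "int m"]
    by (simp add: l_def)
  finally show ?thesis .
qed

lemma survival_ge_one_minus_exp:
  assumes "0 \<le> q" "q \<le> 1/2" "0 < n"
  shows "1 - exp (- real m / (8 * real n)) \<le> survival q (n^2 - 1) (int m)"
proof (cases "m \<le> n")
  case True
  have "1 - exp (- real m / (8 * real n)) \<le> real m / (8 * real n)"
    using exp_ge_add_one_self[of "- real m / (8 * real n)"] by simp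
  then show ?thesis
    using survival_ge_small_level[OF assms True] by linarith
next
  case False
  then show ?thesis
    using survival_ge_large_level[OF assms] by simp
qed

lemma enat_le_hit_time_iff:
  "enat N \<le> hit_time m \<omega> \<longleftrightarrow> (\<forall>t. 0 < t \<and> t < N \<longrightarrow> walk \<omega> t \<noteq> m)"
proof (cases "\<exists>t>0. walk \<omega> t = m")
  case True
  define \<tau> where "\<tau> = (LEAST t. 0 < t \<and> walk \<omega> t = m)"
  have \<tau>: "0 < \<tau>" "walk \<omega> \<tau> = m"
    using LeastI_ex[OF True] by (auto simp: \<tau>_def)
  have \<tau>_least: "\<tau> \<le> t" if "0 < t" "walk \<omega> t = m" for t
    using that by (auto simp: \<tau>_def intro: Least_le)
  have "N \<le> \<tau> \<longleftrightarrow> (\<forall>t. 0 < t \<and> t < N \<longrightarrow> walk \<omega> t \<noteq> m)"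
  proof
    show "N \<le> \<tau> \<Longrightarrow> \<forall>t. 0 < t \<and> t < N \<longrightarrow> walk \<omega> t \<noteq> m"
      by (auto dest: \<tau>_least)
    show "\<forall>t. 0 < t \<and> t < N \<longrightarrow> walk \<omega> t \<noteq> m \<Longrightarrow> N \<le> \<tau>"
      using \<tau> not_le by blast
  qed
  then show ?thesis
    using True by (simp add: hit_time_def \<tau>_def)
next
  case False
  then have "hit_time m \<omega> = \<infinity>"
    unfolding hit_time_def by (rule if_not_P)
  then have "enat N \<le> hit_time m \<omega>"
    by simp
  moreover have "\<forall>t. 0 < t \<and> t < N \<longrightarrow> walk \<omega> t \<noteq> m"
    using False by blast
  ultimately show ?thesis
    by blast
qed

lemma survival_le_prob_hit_time_ge:
  assumes "0 < N"
  shows "survival q (N - 1) m \<le>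
    measure (lazy_walk_space q) {\<omega> \<in> space (lazy_walk_space q). enat N \<le> hit_time m \<omega>}"
proof -
  interpret prob_space "lazy_walk_space q"
    by (rule prob_space_lazy_walk_space)
  have "{\<omega> \<in> space (lazy_walk_space q). enat N \<le> hit_time m \<omega>} =
      {\<omega> \<in> space (lazy_walk_space q). \<forall>t\<in>{..<N}. 0 < t \<longrightarrow> walk \<omega> t \<noteq> m}"
    by (auto simp: enat_le_hit_time_iff)
  also have "\<dots> \<in> sets (lazy_walk_space q)"
    unfolding lazy_walk_space_def by measurable
  finally have "{\<omega> \<in> space (lazy_walk_space q). enat N \<le> hit_time m \<omega>} \<in> events" .
  moreover have "stays_below (N - 1) m \<subseteq> {\<omega> \<in> space (lazy_walk_space q). enat N \<le> hit_time m \<omega>}"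
  proof
    fix \<omega>
    assume \<omega>: "\<omega> \<in> stays_below (N - 1) m"
    have "walk \<omega> t \<noteq> m" if "t < N" for t
    proof -
      have "t \<le> N - 1"
        using that by simp
      then show ?thesis
        using \<omega> by (auto simp: stays_below_def)
    qed
    then show "\<omega> \<in> {\<omega> \<in> space (lazy_walk_space q). enat N \<le> hit_time m \<omega>}"
      by (simp add: enat_le_hit_time_iff)
  qed
  ultimately show ?thesis
    unfolding survival_def by (rule finite_measure_mono[rotated])
qed

theorem corollary2p3:
  shows "\<exists>c::real. 0 < c \<and> c \<le> 1/2 \<and>
    (\<forall>q::real. 0 < q \<and> q < 1/2 \<longrightarrow>
      (\<forall>m::nat. m > 0 \<longrightarrow>
        (\<forall>n::nat. n > 1 \<longrightarrow>
          measure (lazy_walk_space q)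
            {\<omega> \<in> space (lazy_walk_space q). hit_time (int m) \<omega> \<ge> enat (n^2)}
          \<ge> 1 - exp (- c * real m / real n))))"
proof (intro exI[of _ "1/8"] conjI allI impI)
  fix q :: real and m n :: nat
  assume "0 < q \<and> q < 1/2" "m > 0" "n > 1"
  then have "1 - exp (- (1/8) * real m / real n) \<le> survival q (n^2 - 1) (int m)"
    using survival_ge_one_minus_exp[of q n m] by simp
  also have "\<dots> \<le> measure (lazy_walk_space q)
      {\<omega> \<in> space (lazy_walk_space q). hit_time (int m) \<omega> \<ge> enat (n^2)}"
    using survival_le_prob_hit_time_ge[of "n^2" q "int m"] \<open>n > 1\<close> by simp
  finally show "1 - exp (- (1/8) * real m / real n) \<le> measure (lazy_walk_space q)
      {\<omega> \<in> space (lazy_walk_space q). hit_time (int m) \<omega> \<ge> enat (n^2)}" .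
qed simp_all

end
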